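(* Let $G$ be a finite simple connected graph that is edge-reconstructable (so that $ern(G)$ is defined), and suppose $ern(G)\geq 3$. Then $G$ is $2$-swappable.
   Context: All graphs are finite and simple. For a graph $G$ and $e\in E(G)$, the unlabeled graph $G-e$ is an edge-card of $G$; the edge-deck $\mathcal{ED}(G)$ is the multiset of all edge-cards $G-e$, $e\in E(G)$ (taken up to isomorphism). For a sub-multiset $S\subseteq\mathcal{ED}(G)$, a blocker of $S$ is a graph $H\not\cong G$ such that $S\subseteq\mathcal{ED}(H)$ as multisets. $G$ is reconstructable from $S$ if $S$ has no blocker; $G$ is edge-reconstructable if it is reconstructable from $\mathcal{ED}(G)$. For such $G$, the edge reconstruction number $ern(G)$ is the minimum size of a sub-multiset $S\subseteq\mathcal{ED}(G)$ from which $G$ is reconstructable. For $A\subseteq E(G)$ and $B\subseteq E(\bar G)$ (edges of the complement), $G-A+B$ denotes the graph on $V(G)$ with edge set $(E(G)\setminus A)\cup B$. For a positive integer $k$, $G$ is $k$-swappable if for every $e\in E(G)$ there exist $A\subseteq E(G)$ and $B\subseteq E(\bar G)$ with $e\in A$, $|A|\leq k$, and $G\cong G-A+B$. *)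

theory Defs
  imports Main "HOL-Library.Multiset"
begin

text \<open>A finite simple graph is a pair (V, E): a finite vertex set V of naturals and
a set E of 2-element subsets of V. Every finite graph is isomorphic to one of this form.\<close>

type_synonym graph = "nat set \<times> nat set set"

definition possible_edges :: "nat set \<Rightarrow> nat set set" where
  "possible_edges V = {{u, v} | u v. u \<in> V \<and> v \<in> V \<and> u \<noteq> v}"

definition is_graph :: "graph \<Rightarrow> bool" where
  "is_graph G \<longleftrightarrow> finite (fst G) \<and> snd G \<subseteq> possible_edges (fst G)"

definition graph_iso :: "graph \<Rightarrow> graph \<Rightarrow> bool" where
  "graph_iso G H \<longleftrightarrow> (\<exists>f. bij_betw f (fst G) (fst H) \<and>
     (\<forall>u\<in>fst G. \<forall>v\<in>fst G. {u, v} \<in> snd G \<longleftrightarrow> {f u, f v} \<in> snd H))"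

text \<open>Unlabeled graph = isomorphism class.\<close>
definition iso_class :: "graph \<Rightarrow> graph set" where
  "iso_class G = {H. is_graph H \<and> graph_iso H G}"

definition connected_graph :: "graph \<Rightarrow> bool" where
  "connected_graph G \<longleftrightarrow> fst G \<noteq> {} \<and>
     (\<forall>u\<in>fst G. \<forall>v\<in>fst G. (u, v) \<in> {(x, y). {x, y} \<in> snd G}\<^sup>*)"

definition edge_deck :: "graph \<Rightarrow> graph set multiset" where
  "edge_deck G = image_mset (\<lambda>e. iso_class (fst G, snd G - {e})) (mset_set (snd G))"

definition is_blocker :: "graph \<Rightarrow> graph set multiset \<Rightarrow> graph \<Rightarrow> bool" where
  "is_blocker G S H \<longleftrightarrow> is_graph H \<and> \<not> graph_iso H G \<and> S \<subseteq># edge_deck H"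

definition reconstructable_from :: "graph \<Rightarrow> graph set multiset \<Rightarrow> bool" where
  "reconstructable_from G S \<longleftrightarrow> \<not> (\<exists>H. is_blocker G S H)"

definition edge_reconstructable :: "graph \<Rightarrow> bool" where
  "edge_reconstructable G \<longleftrightarrow> reconstructable_from G (edge_deck G)"

definition ern :: "graph \<Rightarrow> nat" where
  "ern G = (LEAST k. \<exists>S. S \<subseteq># edge_deck G \<and> size S = k \<and> reconstructable_from G S)"

definition swappable :: "nat \<Rightarrow> graph \<Rightarrow> bool" where
  "swappable k G \<longleftrightarrow> (\<forall>e\<in>snd G. \<exists>A B. A \<subseteq> snd G \<and>
      B \<subseteq> possible_edges (fst G) - snd G \<and> e \<in> A \<and> card A \<le> k \<and>
      graph_iso (fst G, (snd G - A) \<union> B) G)"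

end

theory Submission
  imports Defs
begin

text \<open>Let e be an edge lying in no swap of at most two edges, and f \<noteq> e another edge. As
ern(G) \<ge> 3, the cards G - e and G - f have a blocker H, with H - x \<cong> G - e and H - y \<cong> G - f.
Read through the first isomorphism, H = G - e + b for a non-edge b (b = e would give H \<cong> G) and
y becomes an edge h \<noteq> e; hence a vertex bijection \<chi> maps G - {e, h} + b onto G - f. Adding the
preimage under \<chi> of any graph G - f + z \<cong> G yields G - {e, h} + b + c \<cong> G: if c \<notin> E this is a
2-swap at e, if c = h a 1-swap at e, so c = e, i.e. \<chi> e = z. For z = f this makes h 1-swappable.
Choosing f 1-swappable whenever some edge other than e is, G - f + b' \<cong> G for a non-edge b',
and z = b' gives \<chi> e = b' \<noteq> f = \<chi> e.\<close>

lemma possible_edges_subset_Pow: "possible_edges V \<subseteq> Pow V"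
  unfolding possible_edges_def by auto

lemma is_graph_finite_edges: "is_graph G \<Longrightarrow> finite (snd G)"
  unfolding is_graph_def using possible_edges_subset_Pow
  by (meson finite_Pow_iff finite_subset)

lemma image_in_possible_edges:
  assumes "bij_betw \<chi> V W" "x \<in> possible_edges V"
  shows "\<chi> ` x \<in> possible_edges W"
proof -
  from assms(2) obtain u v where x: "x = {u, v}" "u \<in> V" "v \<in> V" "u \<noteq> v"
    unfolding possible_edges_def by auto
  then have "\<chi> u \<noteq> \<chi> v" "\<chi> u \<in> W" "\<chi> v \<in> W"
    using assms(1) bij_betw_imp_inj_on[OF assms(1)] bij_betwE by (blast dest: inj_onD)+
  then show ?thesis using x unfolding possible_edges_def by auto
qed

lemma graph_iso_refl: "graph_iso G G"
  unfolding graph_iso_def by (intro exI[of _ id]) auto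

lemma graph_iso_sym:
  assumes "graph_iso G H"
  shows "graph_iso H G"
proof -
  from assms obtain f where f: "bij_betw f (fst G) (fst H)"
    and edges: "\<And>u v. u \<in> fst G \<Longrightarrow> v \<in> fst G \<Longrightarrow> {u, v} \<in> snd G \<longleftrightarrow> {f u, f v} \<in> snd H"
    unfolding graph_iso_def by blast
  define g where "g = inv_into (fst G) f"
  have g: "bij_betw g (fst H) (fst G)" unfolding g_def using f by (rule bij_betw_inv_into)
  have "{u, v} \<in> snd H \<longleftrightarrow> {g u, g v} \<in> snd G" if "u \<in> fst H" "v \<in> fst H" for u v
    using edges[of "g u" "g v"] bij_betwE[OF g] that
      bij_betw_inv_into_right[OF f, folded g_def] by auto
  with g show ?thesis unfolding graph_iso_def by blast
qed

lemma graph_iso_trans: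
  assumes "graph_iso G H" "graph_iso H K"
  shows "graph_iso G K"
proof -
  from assms obtain f g where f: "bij_betw f (fst G) (fst H)" and g: "bij_betw g (fst H) (fst K)"
    and ef: "\<And>u v. u \<in> fst G \<Longrightarrow> v \<in> fst G \<Longrightarrow> {u, v} \<in> snd G \<longleftrightarrow> {f u, f v} \<in> snd H"
    and eg: "\<And>u v. u \<in> fst H \<Longrightarrow> v \<in> fst H \<Longrightarrow> {u, v} \<in> snd H \<longleftrightarrow> {g u, g v} \<in> snd K"
    unfolding graph_iso_def by blast
  have "{u, v} \<in> snd G \<longleftrightarrow> {(g \<circ> f) u, (g \<circ> f) v} \<in> snd K" if "u \<in> fst G" "v \<in> fst G" for u v
    using ef[OF that] eg bij_betwE[OF f] that by simp
  with bij_betw_trans[OF f g] show ?thesis unfolding graph_iso_def by blast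
qed

lemma graph_iso_iff_edge_image:
  assumes "X \<subseteq> possible_edges V" "Y \<subseteq> possible_edges W"
  shows "graph_iso (V, X) (W, Y) \<longleftrightarrow> (\<exists>\<chi>. bij_betw \<chi> V W \<and> (`) \<chi> ` X = Y)"
proof
  assume "graph_iso (V, X) (W, Y)"
  then obtain \<chi> where \<chi>: "bij_betw \<chi> V W"
    and edges: "\<And>u v. u \<in> V \<Longrightarrow> v \<in> V \<Longrightarrow> {u, v} \<in> X \<longleftrightarrow> {\<chi> u, \<chi> v} \<in> Y"
    unfolding graph_iso_def by auto
  have "(`) \<chi> ` X \<subseteq> Y"
  proof
    fix z assume "z \<in> (`) \<chi> ` X"
    then obtain x where "x \<in> X" "z = \<chi> ` x" by blast
    moreover from \<open>x \<in> X\<close> obtain u v where "x = {u, v}" "u \<in> V" "v \<in> V"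
      using assms(1) unfolding possible_edges_def by blast
    ultimately show "z \<in> Y" using edges by simp
  qed
  moreover have "Y \<subseteq> (`) \<chi> ` X"
  proof
    fix y assume "y \<in> Y"
    then obtain a c where y: "y = {a, c}" "a \<in> W" "c \<in> W"
      using assms(2) unfolding possible_edges_def by blast
    define u v where "u = inv_into V \<chi> a" and "v = inv_into V \<chi> c"
    have "u \<in> V" "v \<in> V" "\<chi> u = a" "\<chi> v = c"
      using y \<chi> unfolding u_def v_def
      by (auto simp: bij_betw_inv_into_right inv_into_into bij_betw_def)
    then have "{u, v} \<in> X" "y = \<chi> ` {u, v}" using edges \<open>y \<in> Y\<close> y by auto
    then show "y \<in> (`) \<chi> ` X" by blast
  qed
  ultimately show "\<exists>\<chi>. bij_betw \<chi> V W \<and> (`) \<chi> ` X = Y" using \<chi> by blast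
next
  assume "\<exists>\<chi>. bij_betw \<chi> V W \<and> (`) \<chi> ` X = Y"
  then obtain \<chi> where \<chi>: "bij_betw \<chi> V W" and img: "(`) \<chi> ` X = Y" by blast
  have inj: "inj_on ((`) \<chi>) (Pow V)"
    using \<chi> inj_on_image_Pow bij_betw_def by blast
  have "X \<subseteq> Pow V" using assms(1) possible_edges_subset_Pow by blast
  then have "{u, v} \<in> X \<longleftrightarrow> {\<chi> u, \<chi> v} \<in> Y" if "u \<in> V" "v \<in> V" for u v
    using inj_on_image_mem_iff[OF inj, of "{u, v}" X] that img by simp
  with \<chi> show "graph_iso (V, X) (W, Y)" unfolding graph_iso_def by auto
qed

lemma iso_class_eq_imp_graph_iso:
  "iso_class A = iso_class B \<Longrightarrow> is_graph A \<Longrightarrow> graph_iso A B"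
  unfolding iso_class_def using graph_iso_refl by blast

lemma ern_le_size:
  assumes "S \<subseteq># edge_deck G" "reconstructable_from G S"
  shows "ern G \<le> size S"
  unfolding ern_def by (rule Least_le) (use assms in blast)

lemma ern_le_card_edges:
  assumes "edge_reconstructable G"
  shows "ern G \<le> card (snd G)"
  using ern_le_size[of "edge_deck G" G] assms
  unfolding edge_reconstructable_def edge_deck_def by simp

lemma add_mset_pair_subseteq_image_mset:
  assumes "{#a, b#} \<subseteq># image_mset c (mset_set X)" "finite X"
  obtains x y where "x \<in> X" "y \<in> X" "x \<noteq> y" "c x = a" "c y = b"
proof -
  have "a \<in># image_mset c (mset_set X)" using assms(1) by (rule mset_subset_eqD) simp
  then obtain x where x: "x \<in> X" "c x = a" using assms(2) by auto
  have "mset_set X = add_mset x (mset_set (X - {x}))"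
    using x assms(2) by (simp add: mset_set.remove)
  then have "{#b#} \<subseteq># image_mset c (mset_set (X - {x}))"
    using assms(1) x by simp
  then have "b \<in> c ` (X - {x})" using assms(2) by simp
  then show ?thesis using that x by blast
qed

lemma two_cards_blocker:
  assumes "is_graph G" "ern G \<ge> 3" "e \<in> snd G" "f \<in> snd G" "e \<noteq> f"
  obtains H x y where "is_graph H" "\<not> graph_iso H G" "x \<in> snd H" "y \<in> snd H" "x \<noteq> y"
    "graph_iso (fst H, snd H - {x}) (fst G, snd G - {e})"
    "graph_iso (fst H, snd H - {y}) (fst G, snd G - {f})"
proof -
  define card_of where "card_of K z = iso_class (fst K, snd K - {z})" for K z
  define S where "S = {#card_of G e, card_of G f#}"
  have "mset_set {e, f} \<subseteq># mset_set (snd G)"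
    using assms is_graph_finite_edges by (intro subset_imp_msubset_mset_set) auto
  then have "image_mset (card_of G) {#e, f#} \<subseteq># image_mset (card_of G) (mset_set (snd G))"
    using assms(5) by (intro image_mset_subseteq_mono) simp
  then have "S \<subseteq># edge_deck G" unfolding S_def edge_deck_def card_of_def by simp
  moreover have "size S < ern G" using assms(2) unfolding S_def by simp
  ultimately obtain H where H: "is_graph H" "\<not> graph_iso H G" "S \<subseteq># edge_deck H"
    using ern_le_size unfolding reconstructable_from_def is_blocker_def by (meson not_le)
  obtain x y where xy: "x \<in> snd H" "y \<in> snd H" "x \<noteq> y"
    "card_of H x = card_of G e" "card_of H y = card_of G f"
  proof (rule add_mset_pair_subseteq_image_mset)
    show "{#card_of G e, card_of G f#} \<subseteq># image_mset (card_of H) (mset_set (snd H))"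
      using H(3) unfolding S_def edge_deck_def card_of_def .
  qed (use H(1) is_graph_finite_edges in auto)
  have "is_graph (fst H, snd H - {z})" for z using H(1) unfolding is_graph_def by auto
  with xy have "graph_iso (fst H, snd H - {x}) (fst G, snd G - {e})"
    "graph_iso (fst H, snd H - {y}) (fst G, snd G - {f})"
    unfolding card_of_def by (auto intro: iso_class_eq_imp_graph_iso)
  with H xy that show ?thesis by blast
qed

lemma edge_image_Diff_singleton:
  assumes "bij_betw \<psi> W V" "X \<subseteq> possible_edges W" "x \<in> X"
  shows "(`) \<psi> ` (X - {x}) = (`) \<psi> ` X - {\<psi> ` x}"
proof -
  have "inj_on ((`) \<psi>) (Pow W)" using assms(1) inj_on_image_Pow bij_betw_def by blast
  moreover have "X \<subseteq> Pow W" using assms(2) possible_edges_subset_Pow by blast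
  ultimately show ?thesis using inj_on_image_set_diff[of "(`) \<psi>" "Pow W" X "{x}"] assms(3) by auto
qed

lemma near_iso_of_card_isos:
  assumes EH: "EH \<subseteq> possible_edges W" and E: "E \<subseteq> possible_edges V"
    and not_iso: "\<not> graph_iso (W, EH) (V, E)"
    and xy: "x \<in> EH" "y \<in> EH" "x \<noteq> y" and "e \<in> E"
    and isox: "graph_iso (W, EH - {x}) (V, E - {e})"
    and isoy: "graph_iso (W, EH - {y}) (V, E - {f})"
  obtains \<chi> h b where "bij_betw \<chi> V V" "h \<in> E - {e}" "b \<in> possible_edges V - E"
    "(`) \<chi> ` (E - {e, h} \<union> {b}) = E - {f}"
proof -
  have "EH - {x} \<subseteq> possible_edges W" "E - {e} \<subseteq> possible_edges V" using EH E by auto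
  with isox obtain \<psi> where \<psi>: "bij_betw \<psi> W V" and \<psi>x: "(`) \<psi> ` (EH - {x}) = E - {e}"
    by (auto simp: graph_iso_iff_edge_image)
  define b h where "b = \<psi> ` x" and "h = \<psi> ` y"
  have "inj_on ((`) \<psi>) (Pow W)" using \<psi> inj_on_image_Pow bij_betw_def by blast
  moreover have "x \<in> Pow W" "y \<in> Pow W" using xy EH possible_edges_subset_Pow by blast+
  ultimately have "h \<noteq> b" using xy(3) unfolding h_def b_def by (auto dest: inj_onD)
  have \<psi>x': "(`) \<psi> ` EH - {b} = E - {e}"
    unfolding b_def using edge_image_Diff_singleton[OF \<psi> EH xy(1), symmetric] \<psi>x by (simp only:)
  have "b \<in> (`) \<psi> ` EH" "h \<in> (`) \<psi> ` EH" using xy unfolding b_def h_def by auto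
  then have \<psi>EH: "(`) \<psi> ` EH = insert b (E - {e})" and h: "h \<in> E - {e}"
    using \<open>h \<noteq> b\<close> unfolding \<psi>x'[symmetric] by auto
  have b: "b \<in> possible_edges V - E"
  proof
    show "b \<in> possible_edges V"
      using image_in_possible_edges[OF \<psi>] xy(1) EH unfolding b_def by blast
    show "b \<notin> E"
    proof
      assume "b \<in> E"
      moreover have "b \<notin> E - {e}" unfolding \<psi>x'[symmetric] by simp
      ultimately have "(`) \<psi> ` EH = E" using \<psi>EH \<open>e \<in> E\<close> by auto
      with \<psi> have "graph_iso (W, EH) (V, E)"
        by (intro iffD2[OF graph_iso_iff_edge_image[OF EH E]]) blast
      then show False using not_iso by simp
    qed
  qed
  have "(`) \<psi> ` (EH - {y}) = insert b (E - {e}) - {h}"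
    using edge_image_Diff_singleton[OF \<psi> EH xy(2)] \<psi>EH unfolding h_def by (simp only:)
  also have "\<dots> = E - {e, h} \<union> {b}" using \<open>h \<noteq> b\<close> by auto
  finally have \<psi>y: "(`) \<psi> ` (EH - {y}) = E - {e, h} \<union> {b}" .
  have subs: "EH - {y} \<subseteq> possible_edges W" "E - {e, h} \<union> {b} \<subseteq> possible_edges V"
    "E - {f} \<subseteq> possible_edges V"
    using EH E b by auto
  with \<psi> \<psi>y have "graph_iso (W, EH - {y}) (V, E - {e, h} \<union> {b})"
    by (auto simp: graph_iso_iff_edge_image)
  then have "graph_iso (V, E - {e, h} \<union> {b}) (V, E - {f})"
    using isoy by (auto intro: graph_iso_trans graph_iso_sym)
  with subs obtain \<chi> where "bij_betw \<chi> V V" "(`) \<chi> ` (E - {e, h} \<union> {b}) = E - {f}"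
    by (auto simp: graph_iso_iff_edge_image)
  with that h b show ?thesis by blast
qed

lemma blocker_near_iso:
  assumes "is_graph (V, E)" "ern (V, E) \<ge> 3" "e \<in> E" "f \<in> E" "e \<noteq> f"
  obtains \<chi> h b where "bij_betw \<chi> V V" "h \<in> E - {e}" "b \<in> possible_edges V - E"
    "(`) \<chi> ` (E - {e, h} \<union> {b}) = E - {f}"
proof -
  obtain H x y where H: "is_graph H" "\<not> graph_iso H (V, E)"
    and xy: "x \<in> snd H" "y \<in> snd H" "x \<noteq> y"
    and isos: "graph_iso (fst H, snd H - {x}) (V, E - {e})"
      "graph_iso (fst H, snd H - {y}) (V, E - {f})"
    by (rule two_cards_blocker[of "(V, E)" e f]) (use assms in simp_all)
  obtain W EH where H_def: "H = (W, EH)" by (cases H)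
  have "EH \<subseteq> possible_edges W" "E \<subseteq> possible_edges V"
    using H(1) assms(1) unfolding H_def is_graph_def by auto
  from this H(2) xy assms(3) isos show ?thesis
    unfolding H_def fst_conv snd_conv by (rule near_iso_of_card_isos) (rule that)
qed

definition edge_swap :: "graph \<Rightarrow> nat set set \<Rightarrow> nat set set \<Rightarrow> bool" where
  "edge_swap G A B \<longleftrightarrow> A \<subseteq> snd G \<and> B \<subseteq> possible_edges (fst G) - snd G \<and>
     graph_iso (fst G, snd G - A \<union> B) G"

definition swappable_at :: "nat \<Rightarrow> graph \<Rightarrow> nat set \<Rightarrow> bool" where
  "swappable_at k G e \<longleftrightarrow> (\<exists>A B. e \<in> A \<and> card A \<le> k \<and> edge_swap G A B)"

lemma swappable_iff_swappable_at: "swappable k G \<longleftrightarrow> (\<forall>e\<in>snd G. swappable_at k G e)"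
  unfolding swappable_def swappable_at_def edge_swap_def by blast

lemma edge_swap_iff_edge_image:
  assumes "E \<subseteq> possible_edges V"
  shows "edge_swap (V, E) A B \<longleftrightarrow> A \<subseteq> E \<and> B \<subseteq> possible_edges V - E \<and>
    (\<exists>\<chi>. bij_betw \<chi> V V \<and> (`) \<chi> ` (E - A \<union> B) = E)"
proof -
  have "B \<subseteq> possible_edges V - E \<Longrightarrow> E - A \<union> B \<subseteq> possible_edges V" using assms by blast
  then show ?thesis
    unfolding edge_swap_def using graph_iso_iff_edge_image[OF _ assms] by auto
qed

lemma swappable_at_or_preimage:
  assumes E: "E \<subseteq> possible_edges V"
    and \<chi>: "bij_betw \<chi> V V" "(`) \<chi> ` (E - {e, h} \<union> {b}) = E - {f}"
    and e: "e \<in> E" "h \<in> E - {e}" "b \<in> possible_edges V - E"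
    and z: "z \<in> possible_edges V" "z \<notin> E - {f}"
    and \<phi>: "bij_betw \<phi> V V" "(`) \<phi> ` (E - {f} \<union> {z}) = E"
  shows "swappable_at 2 (V, E) e \<or> \<chi> ` e = z"
proof -
  define c where "c = inv_into V \<chi> ` z"
  have c: "c \<in> possible_edges V"
    unfolding c_def using image_in_possible_edges[OF bij_betw_inv_into[OF \<chi>(1)] z(1)] .
  have "z \<subseteq> V" using z(1) possible_edges_subset_Pow by blast
  then have \<chi>c: "\<chi> ` c = z"
    unfolding c_def using \<chi>(1) by (simp add: bij_betw_def image_inv_into_cancel)
  have c_new: "c \<notin> E - {e, h} \<union> {b}"
  proof
    assume "c \<in> E - {e, h} \<union> {b}"
    then have "\<chi> ` c \<in> (`) \<chi> ` (E - {e, h} \<union> {b})" by (rule imageI)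
    then have "\<chi> ` c \<in> E - {f}" by (simp only: \<chi>(2))
    then show False using \<chi>c z(2) by simp
  qed
  have "(`) (\<phi> \<circ> \<chi>) ` (E - {e, h} \<union> {b} \<union> {c})
      = (`) \<phi> ` ((`) \<chi> ` (E - {e, h} \<union> {b}) \<union> {\<chi> ` c})"
    by (simp add: image_image image_comp)
  also have "\<dots> = (`) \<phi> ` (E - {f} \<union> {z})" by (simp only: \<chi>(2) \<chi>c)
  also have "\<dots> = E" by (rule \<phi>(2))
  finally have iso: "\<exists>\<theta>. bij_betw \<theta> V V \<and> (`) \<theta> ` (E - {e, h} \<union> {b} \<union> {c}) = E"
    using bij_betw_trans[OF \<chi>(1) \<phi>(1)] by blast
  consider "c = e" | "c = h" | "c \<notin> E" using c_new by blast
  then show ?thesis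
  proof cases
    case 1
    then show ?thesis using \<chi>c by simp
  next
    case 2
    then have "E - {e, h} \<union> {b} \<union> {c} = E - {e} \<union> {b}" using e by auto
    then have "edge_swap (V, E) {e} {b}"
      using iso e by (simp add: edge_swap_iff_edge_image[OF E])
    then show ?thesis unfolding swappable_at_def by fastforce
  next
    case 3
    have "E - {e, h} \<union> {b} \<union> {c} = E - {e, h} \<union> {b, c}" by auto
    then have "edge_swap (V, E) {e, h} {b, c}"
      using iso e c 3 by (simp add: edge_swap_iff_edge_image[OF E])
    moreover have "card {e, h} \<le> 2" by (simp add: card_insert_le_m1)
    ultimately show ?thesis unfolding swappable_at_def by blast
  qed
qed

lemma swappable_at_of_near_iso:
  assumes E: "E \<subseteq> possible_edges V"
    and \<chi>: "bij_betw \<chi> V V" "(`) \<chi> ` (E - {e, h} \<union> {b}) = E - {f}"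
    and e: "e \<in> E" "h \<in> E - {e}" "b \<in> possible_edges V - E" "f \<in> E"
    and one_swap: "(\<exists>b. edge_swap (V, E) {h} {b}) \<Longrightarrow> (\<exists>b. edge_swap (V, E) {f} {b})"
  shows "swappable_at 2 (V, E) e"
proof (rule ccontr)
  assume not_swappable: "\<not> swappable_at 2 (V, E) e"
  have "f \<in> possible_edges V" "E - {f} \<union> {f} = E" using E e(4) by auto
  then have \<chi>e: "\<chi> ` e = f"
    using swappable_at_or_preimage[OF E \<chi> e(1-3), of f id] not_swappable by simp
  have "E - {h} \<union> {b} = insert e (E - {e, h} \<union> {b})" using e by auto
  then have "(`) \<chi> ` (E - {h} \<union> {b}) = E" using \<chi>(2) \<chi>e e(4) by auto
  then have "edge_swap (V, E) {h} {b}"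
    using \<chi>(1) e by (auto simp: edge_swap_iff_edge_image[OF E])
  then obtain b' \<phi> where b': "b' \<in> possible_edges V - E"
    and \<phi>: "bij_betw \<phi> V V" "(`) \<phi> ` (E - {f} \<union> {b'}) = E"
    using one_swap by (auto simp: edge_swap_iff_edge_image[OF E])
  then have "\<chi> ` e = b'"
    using swappable_at_or_preimage[OF E \<chi> e(1-3), of b' \<phi>] not_swappable by blast
  then show False using \<chi>e b' e(4) by simp
qed

theorem mainTheorem1:
  fixes G :: graph
  assumes "is_graph G"
    and "connected_graph G"
    and "edge_reconstructable G"
    and "ern G \<ge> 3"
  shows "swappable 2 G"
  unfolding swappable_iff_swappable_at
proof
  obtain V E where G: "G = (V, E)" by (cases G)
  have E: "E \<subseteq> possible_edges V" using assms(1) unfolding G is_graph_def by simp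
  fix e assume "e \<in> snd G"
  then have e: "e \<in> E" unfolding G by simp
  have "card E \<ge> 3" using ern_le_card_edges[OF assms(3)] assms(4) unfolding G by simp
  then have "\<not> E \<subseteq> {e}" using card_mono[of "{e}" E] by auto
  then obtain f where f: "f \<in> E - {e}"
    and one_swap: "\<And>h. h \<in> E - {e} \<Longrightarrow> \<exists>b. edge_swap G {h} {b} \<Longrightarrow> \<exists>b. edge_swap G {f} {b}"
    by blast
  have "e \<noteq> f" using f by blast
  obtain \<chi> h b where \<chi>: "bij_betw \<chi> V V" "(`) \<chi> ` (E - {e, h} \<union> {b}) = E - {f}"
    and h: "h \<in> E - {e}" and b: "b \<in> possible_edges V - E"
    by (rule blocker_near_iso[of V E e f]) (use assms(1,4) e f \<open>e \<noteq> f\<close> in \<open>simp_all add: G\<close>)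
  have "swappable_at 2 (V, E) e"
    by (rule swappable_at_of_near_iso[OF E \<chi> e h b]) (use f one_swap[OF h] G in auto)
  then show "swappable_at 2 G e" unfolding G .
qed

end
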